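(* Let $\Gamma$ be a Deza graph with parameters $(n,k,k-1,a)$, $k>1$, $\beta=1$. Let $x$ be an $NA$-vertex and $y$ a vertex not in $\{x,x',x_b,x_b'\}$. Then either all possible edges between $\{x,x_b\}$ and $\{y,y_b\}$ are present, or there are no such edges.
   Context: A Deza graph with parameters $(n,k,b,a)$, $a\le b$, is a $k$-regular graph on $n$ vertices in which any two distinct vertices have $a$ or $b$ common neighbours; $\beta$ is the number of vertices $u\ne v$ with exactly $b$ common neighbours with a given vertex $v$. Since $\beta=1$, for each vertex $x$ let $x_b$ denote the unique vertex having $b=k-1$ common neighbours with $x$. A vertex $x$ is an $A$-vertex if $x$ is adjacent to $x_b$, and an $NA$-vertex otherwise. For an $NA$-vertex $x$, $x'$ denotes the unique neighbour of $x$ not adjacent to $x_b$, and $x_b'=(x')_b=(x_b)'$. *)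

theory Defs
  imports Main
begin

definition common_nbrs :: "'a set \<Rightarrow> ('a \<Rightarrow> 'a \<Rightarrow> bool) \<Rightarrow> 'a \<Rightarrow> 'a \<Rightarrow> nat" where
  "common_nbrs V E x y = card {z \<in> V. E x z \<and> E y z}"

definition deza_graph ::
  "'a set \<Rightarrow> ('a \<Rightarrow> 'a \<Rightarrow> bool) \<Rightarrow> nat \<Rightarrow> nat \<Rightarrow> nat \<Rightarrow> nat \<Rightarrow> bool" where
  "deza_graph V E n k b a \<longleftrightarrow>
     finite V \<and> card V = n \<and>
     (\<forall>x y. E x y \<longrightarrow> x \<in> V \<and> y \<in> V) \<and>
     (\<forall>x y. E x y \<longrightarrow> E y x) \<and>
     (\<forall>x. \<not> E x x) \<and>
     (\<forall>x\<in>V. card {y \<in> V. E x y} = k) \<and>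
     a \<le> b \<and>
     (\<forall>x\<in>V. \<forall>y\<in>V. x \<noteq> y \<longrightarrow>
        common_nbrs V E x y = a \<or> common_nbrs V E x y = b)"

definition deza_beta :: "'a set \<Rightarrow> ('a \<Rightarrow> 'a \<Rightarrow> bool) \<Rightarrow> nat \<Rightarrow> 'a \<Rightarrow> nat" where
  "deza_beta V E b v = card {u \<in> V. u \<noteq> v \<and> common_nbrs V E v u = b}"

text \<open>x_b: the unique vertex having b common neighbours with x (meaningful when beta = 1).\<close>
definition b_partner :: "'a set \<Rightarrow> ('a \<Rightarrow> 'a \<Rightarrow> bool) \<Rightarrow> nat \<Rightarrow> 'a \<Rightarrow> 'a" where
  "b_partner V E b x = (THE u. u \<in> V \<and> u \<noteq> x \<and> common_nbrs V E x u = b)"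

definition A_vertex :: "'a set \<Rightarrow> ('a \<Rightarrow> 'a \<Rightarrow> bool) \<Rightarrow> nat \<Rightarrow> 'a \<Rightarrow> bool" where
  "A_vertex V E b x \<longleftrightarrow> E x (b_partner V E b x)"

definition NA_vertex :: "'a set \<Rightarrow> ('a \<Rightarrow> 'a \<Rightarrow> bool) \<Rightarrow> nat \<Rightarrow> 'a \<Rightarrow> bool" where
  "NA_vertex V E b x \<longleftrightarrow> x \<in> V \<and> \<not> E x (b_partner V E b x)"

definition NA_prime :: "'a set \<Rightarrow> ('a \<Rightarrow> 'a \<Rightarrow> bool) \<Rightarrow> nat \<Rightarrow> 'a \<Rightarrow> 'a" where
  "NA_prime V E b x = (THE z. z \<in> V \<and> E x z \<and> \<not> E z (b_partner V E b x))"

end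

theory Submission
  imports Defs
begin

text \<open>Write \<open>A\<close> for the adjacency matrix and \<open>P\<close> for the permutation matrix of
\<open>x \<mapsto> x\<^sub>b\<close>. Since \<open>\<beta> = 1\<close> and \<open>a < b\<close>, \<open>A\<^sup>2 = (k - a) I + a J + (b - a) P\<close>; as \<open>A\<close>
commutes with \<open>A\<^sup>2\<close> and with \<open>J\<close>, it commutes with \<open>P\<close>, i.e. \<open>x \<sim> y\<^sub>b \<longleftrightarrow> x\<^sub>b \<sim> y\<close>.
For \<open>b = k - 1\<close>, \<open>x\<close> and \<open>x\<^sub>b\<close> differ in exactly one neighbour each, \<open>x'\<close> and
\<open>(x\<^sub>b)' = (x')\<^sub>b\<close>, so any other \<open>y\<close> is adjacent to both or to neither of \<open>x\<close>, \<open>x\<^sub>b\<close>;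
commutation transfers this to \<open>y\<^sub>b\<close>.\<close>

lemma common_nbrs_sym: "common_nbrs V E x y = common_nbrs V E y x"
  by (simp add: common_nbrs_def conj_commute)

lemma sum_common_nbrs_eq_card_walks:
  assumes "finite V"
  shows "(\<Sum>z\<in>{z \<in> V. E u z}. common_nbrs V E z v) =
         card {(z, w) \<in> V \<times> V. E u z \<and> E z w \<and> E v w}"
proof -
  have "{(z, w) \<in> V \<times> V. E u z \<and> E z w \<and> E v w} =
        (SIGMA z:{z \<in> V. E u z}. {w \<in> V. E z w \<and> E v w})"
    by auto
  then show ?thesis
    using assms by (simp add: common_nbrs_def)
qed

lemma sum_common_nbrs_swap:
  assumes "finite V" and sym: "\<And>x y. E x y \<Longrightarrow> E y x"
  shows "(\<Sum>z\<in>{z \<in> V. E u z}. common_nbrs V E z v) =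
         (\<Sum>z\<in>{z \<in> V. E v z}. common_nbrs V E z u)"
proof -
  have "{(z, w) \<in> V \<times> V. E v z \<and> E z w \<and> E u w} =
        prod.swap ` {(z, w) \<in> V \<times> V. E u z \<and> E z w \<and> E v w}"
    using sym by (auto simp: image_iff)
  then show ?thesis
    using assms(1) by (simp add: sum_common_nbrs_eq_card_walks card_image)
qed

lemma card_nbrs_not_adjacent:
  assumes "finite V" and sym: "\<And>x y. E x y \<Longrightarrow> E y x"
    and deg: "card {z \<in> V. E x z} = k" and "k > 0"
    and common: "common_nbrs V E x w = k - 1"
  shows "card {z \<in> V. E x z \<and> \<not> E z w} = 1"
proof -
  have "{z \<in> V. E x z \<and> \<not> E z w} = {z \<in> V. E x z} - {z \<in> V. E x z \<and> E w z}"
    using sym by blast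
  moreover have "card ({z \<in> V. E x z} - {z \<in> V. E x z \<and> E w z}) = k - (k - 1)"
    using \<open>finite V\<close> deg common by (subst card_Diff_subset) (auto simp: common_nbrs_def)
  ultimately show ?thesis
    using \<open>k > 0\<close> by simp
qed

lemma deza_graph_a_less_b:
  assumes deza: "deza_graph V E n k b a" and "v \<in> V"
    and beta: "deza_beta V E b v = 1" and "k > 1"
  shows "a < b"
proof (rule ccontr)
  assume "\<not> a < b"
  with deza have "a = b"
    by (simp add: deza_graph_def)
  with deza \<open>v \<in> V\<close> have "{u \<in> V. u \<noteq> v \<and> common_nbrs V E v u = b} = V - {v}"
    by (auto simp: deza_graph_def)
  with beta have card_others: "card (V - {v}) = 1"
    by (simp add: deza_beta_def)
  have "finite V" and "{u \<in> V. E v u} \<subseteq> V - {v}"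
    using deza by (auto simp: deza_graph_def)
  then have "card {u \<in> V. E v u} \<le> 1"
    using card_others by (metis card_mono finite_Diff)
  moreover have "card {u \<in> V. E v u} = k"
    using deza \<open>v \<in> V\<close> by (simp add: deza_graph_def)
  ultimately show False
    using \<open>k > 1\<close> by simp
qed

locale deza_beta_one =
  fixes V :: "'a set" and E :: "'a \<Rightarrow> 'a \<Rightarrow> bool" and n k b a :: nat
  assumes deza: "deza_graph V E n k b a"
    and beta_one: "\<forall>v\<in>V. deza_beta V E b v = 1"
    and a_less_b: "a < b"
begin

abbreviation partner :: "'a \<Rightarrow> 'a" where
  "partner \<equiv> b_partner V E b"

lemma finite_V: "finite V"
  using deza by (simp add: deza_graph_def)

lemma adj_sym: "E x y \<longleftrightarrow> E y x"
  using deza by (auto simp: deza_graph_def)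

lemma degree: "x \<in> V \<Longrightarrow> card {y \<in> V. E x y} = k"
  using deza by (simp add: deza_graph_def)

lemma common_nbrs_self: "x \<in> V \<Longrightarrow> common_nbrs V E x x = k"
  by (simp add: common_nbrs_def degree)

lemma b_partners_singleton:
  assumes "v \<in> V"
  shows "{u \<in> V. u \<noteq> v \<and> common_nbrs V E v u = b} = {partner v}"
proof -
  have "card {u \<in> V. u \<noteq> v \<and> common_nbrs V E v u = b} = 1"
    using beta_one assms by (simp add: deza_beta_def)
  then obtain u where u: "{u \<in> V. u \<noteq> v \<and> common_nbrs V E v u = b} = {u}"
    by (rule card_1_singletonE)
  then have "partner v = u"
    unfolding b_partner_def by (intro the_equality) blast+
  with u show ?thesis
    by simp
qed

lemma partner_in_V: "v \<in> V \<Longrightarrow> partner v \<in> V"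
  and partner_neq: "v \<in> V \<Longrightarrow> partner v \<noteq> v"
  and common_nbrs_partner: "v \<in> V \<Longrightarrow> common_nbrs V E v (partner v) = b"
  using b_partners_singleton by blast+

lemma partner_unique:
  "\<lbrakk>v \<in> V; u \<in> V; u \<noteq> v; common_nbrs V E v u = b\<rbrakk> \<Longrightarrow> u = partner v"
  using b_partners_singleton by blast

lemma partner_partner: "v \<in> V \<Longrightarrow> partner (partner v) = v"
  by (metis common_nbrs_partner common_nbrs_sym partner_in_V partner_unique)

lemma b_le_k:
  assumes "v \<in> V"
  shows "b \<le> k"
proof -
  have "common_nbrs V E v (partner v) \<le> card {z \<in> V. E v z}"
    unfolding common_nbrs_def by (intro card_mono) (auto simp: finite_V)
  with assms show ?thesis
    by (simp add: common_nbrs_partner degree)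
qed

lemma common_nbrs_eq:
  assumes "z \<in> V" and "v \<in> V"
  shows "common_nbrs V E z v = (if z = v then k else if z = partner v then b else a)"
proof -
  have "common_nbrs V E z v \<noteq> b" if "z \<noteq> v" "z \<noteq> partner v"
    using that assms partner_unique common_nbrs_sym by metis
  moreover have "common_nbrs V E z v = a \<or> common_nbrs V E z v = b" if "z \<noteq> v"
    using that assms deza by (simp add: deza_graph_def)
  ultimately show ?thesis
    using assms by (auto simp: common_nbrs_self common_nbrs_partner common_nbrs_sym)
qed

lemma sum_common_nbrs:
  assumes "u \<in> V" and "v \<in> V"
  shows "(\<Sum>z\<in>{z \<in> V. E u z}. common_nbrs V E z v) =
         k * a + (if E u v then k - a else 0) + (if E u (partner v) then b - a else 0)"
proof -
  have "(\<Sum>z\<in>{z \<in> V. E u z}. common_nbrs V E z v) =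
        (\<Sum>z\<in>{z \<in> V. E u z}. a + (if z = v then k - a else 0)
           + (if z = partner v then b - a else 0))"
    using assms a_less_b b_le_k[OF assms(2)] partner_neq
    by (intro sum.cong refl) (auto simp: common_nbrs_eq)
  also have "\<dots> = k * a + (if E u v then k - a else 0) + (if E u (partner v) then b - a else 0)"
    using assms finite_V by (simp add: sum.distrib degree partner_in_V)
  finally show ?thesis .
qed

lemma adj_partner_comm:
  assumes "u \<in> V" and "v \<in> V"
  shows "E u (partner v) \<longleftrightarrow> E (partner u) v"
proof -
  have "(\<Sum>z\<in>{z \<in> V. E u z}. common_nbrs V E z v) =
        (\<Sum>z\<in>{z \<in> V. E v z}. common_nbrs V E z u)"
    by (rule sum_common_nbrs_swap[OF finite_V iffD1[OF adj_sym]])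
  then have "(if E u (partner v) then b - a else 0) = (if E v (partner u) then b - a else 0)"
    using assms by (simp add: sum_common_nbrs adj_sym[of u v])
  then have "E u (partner v) \<longleftrightarrow> E v (partner u)"
    using a_less_b by (simp split: if_splits)
  then show ?thesis
    by (simp add: adj_sym)
qed

end

locale deza_beta_one_kminus1 = deza_beta_one V E n k "k - 1" a
  for V :: "'a set" and E n k a
begin

abbreviation dash :: "'a \<Rightarrow> 'a" where
  "dash \<equiv> NA_prime V E (k - 1)"

lemma nbrs_nonadjacent_to_partner:
  assumes "x \<in> V"
  shows "{z \<in> V. E x z \<and> \<not> E z (partner x)} = {dash x}"
proof -
  have "k > 0"
    using a_less_b by simp
  have "card {z \<in> V. E x z \<and> \<not> E z (partner x)} = 1"
    using finite_V iffD1[OF adj_sym] degree[OF assms] \<open>k > 0\<close> common_nbrs_partner[OF assms]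
    by (rule card_nbrs_not_adjacent)
  then obtain p where p: "{z \<in> V. E x z \<and> \<not> E z (partner x)} = {p}"
    by (erule card_1_singletonE)
  then have "dash x = p"
    unfolding NA_prime_def by (intro the_equality) blast+
  with p show ?thesis
    by simp
qed

lemma dash_partner:
  assumes "x \<in> V"
  shows "dash (partner x) = partner (dash x)"
proof -
  have x': "dash x \<in> V" "E x (dash x)" "\<not> E (dash x) (partner x)"
    using nbrs_nonadjacent_to_partner[OF assms] by blast+
  have "E (partner x) (partner (dash x))"
    using adj_partner_comm[OF partner_in_V[OF assms] x'(1)] x'(2)
    unfolding partner_partner[OF assms] by blast
  moreover have "\<not> E (partner (dash x)) x"
    using adj_partner_comm[OF assms x'(1)] x'(3)
      adj_sym[of x "partner (dash x)"] adj_sym[of "dash x" "partner x"] by blast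
  ultimately have "partner (dash x) \<in> {z \<in> V. E (partner x) z \<and> \<not> E z (partner (partner x))}"
    using partner_in_V[OF x'(1)] unfolding partner_partner[OF assms] by blast
  then show ?thesis
    unfolding nbrs_nonadjacent_to_partner[OF partner_in_V[OF assms]] by simp
qed

lemma adj_iff_adj_partner:
  assumes "x \<in> V" and "y \<in> V" and "y \<noteq> dash x" and "y \<noteq> partner (dash x)"
  shows "E x y \<longleftrightarrow> E (partner x) y"
proof -
  have "{z \<in> V. E (partner x) z \<and> \<not> E z x} = {partner (dash x)}"
    using nbrs_nonadjacent_to_partner[OF partner_in_V[OF assms(1)]]
    unfolding partner_partner[OF assms(1)] dash_partner[OF assms(1)] .
  then show ?thesis
    using nbrs_nonadjacent_to_partner[OF assms(1)] assms adj_sym[of y] by blast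
qed

end

theorem lemma15:
  fixes V :: "'a set" and E :: "'a \<Rightarrow> 'a \<Rightarrow> bool" and n k a :: nat and x y :: 'a
  assumes "deza_graph V E n k (k - 1) a"
    and "k > 1"
    and "\<forall>v\<in>V. deza_beta V E (k - 1) v = 1"
    and "NA_vertex V E (k - 1) x"
    and "y \<in> V"
    and "y \<notin> {x, NA_prime V E (k - 1) x, b_partner V E (k - 1) x,
                b_partner V E (k - 1) (NA_prime V E (k - 1) x)}"
  shows "(E x y \<and> E x (b_partner V E (k - 1) y) \<and>
          E (b_partner V E (k - 1) x) y \<and>
          E (b_partner V E (k - 1) x) (b_partner V E (k - 1) y))
       \<or> (\<not> E x y \<and> \<not> E x (b_partner V E (k - 1) y) \<and>
          \<not> E (b_partner V E (k - 1) x) y \<and>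
          \<not> E (b_partner V E (k - 1) x) (b_partner V E (k - 1) y))"
proof -
  have x: "x \<in> V"
    using assms(4) by (simp add: NA_vertex_def)
  have "a < k - 1"
    using deza_graph_a_less_b[OF assms(1) x _ assms(2)] assms(3) x by blast
  then interpret deza_beta_one_kminus1 V E n k a
    using assms(1,3) by unfold_locales auto
  have "E x y \<longleftrightarrow> E (partner x) y"
    using adj_iff_adj_partner[OF x assms(5)] assms(6) by simp
  moreover have "E x (partner y) \<longleftrightarrow> E (partner x) y"
    by (rule adj_partner_comm[OF x assms(5)])
  moreover have "E (partner x) (partner y) \<longleftrightarrow> E x y"
    using adj_partner_comm[OF partner_in_V[OF x] assms(5)] unfolding partner_partner[OF x] .
  ultimately show ?thesis
    by blast
qed

end
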